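(* (i) For every state $s\in S$ there is exactly one finite sequence of feasible transitions $s_0\xrightarrow{\alpha_1\cdots\alpha_k}s$ with all actions $\alpha_i\in\{D,I,N_=,d_-,b_+\}$ (i.e. never using $N_<$) which visits $s_0$ only at its start. (ii) For every state $s\in S$ there is exactly one finite sequence of feasible transitions from $s$ to $s_0$ that never uses the action $I$ and visits $s_0$ only at its end. In particular the BDM Markov chain is irreducible.
   Context: Fix integers $M\ge 1$ and $q\ge 2$. The augmented state set is $\overline S=\{(b_1,\dots,b_M,d;T,t): b_m,d,T\in\mathbb Z,\ 1\le t\le M+1,\ d+T+\sum_{m=1}^M b_m=0\}$, and the BDM state set is $S=\{s\in\overline S: 0\le T\le M\}$, with initial state $s_0=(0,\dots,0,0;0,M+1)$. The feasible transitions (actions) from $s=(b_1,\dots,b_M,d;T,t)\in S$ are: (a) if $t\le M$ and $b_t>d$: action $D$ (probability $(q-1)/q$) to $(b_1,\dots,b_{t-1},d,b_{t+1},\dots,b_M,b_t;T,t+1)$ (swap of $b_t$ and $d$), and action $I$ (probability $1/q$) to $(b_1,\dots,b_M,d;T,t+1)$; (b) if $t\le M$ and $b_t=d$: action $N_=$ (probability 1) to $(b_1,\dots,b_M,d;T,t+1)$; (c) if $t\le M$ and $b_t<d$: action $N_<$ (probability 1) to $(b_1,\dots,b_M,d;T,t+1)$; (d) if $t=M+1$, $T<M$: action $d_-$ (probability 1) to $(b_1,\dots,b_M,d-1;T+1,1)$; (e) if $t=M+1$, $T=M$: action $b_+$ (probability 1) to $(b_1+1,\dots,b_M+1,d;0,1)$.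 *)

theory Defs
  imports Main "HOL.Real"
begin

text \<open>BDM states: (b, d, T, t) with b = [b_1,...,b_M] (index m stored at position m-1).\<close>
type_synonym bdm_state = "int list \<times> int \<times> int \<times> nat"

datatype action = D | I | N_eq | N_less | d_minus | b_plus

definition in_S :: "nat \<Rightarrow> bdm_state \<Rightarrow> bool" where
  "in_S M s = (case s of (b, d, T, t) \<Rightarrow>
     length b = M \<and> 1 \<le> t \<and> t \<le> M + 1 \<and> d + T + sum_list b = 0 \<and> 0 \<le> T \<and> T \<le> int M)"

definition s0 :: "nat \<Rightarrow> bdm_state" where
  "s0 M = (replicate M 0, 0, 0, M + 1)"

definition step :: "nat \<Rightarrow> bdm_state \<Rightarrow> action \<Rightarrow> bdm_state \<Rightarrow> bool" where
  "step M s a s' = (in_S M s \<and> (case s of (b, d, T, t) \<Rightarrow>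
      (a = D \<and> t \<le> M \<and> b ! (t - 1) > d \<and> s' = (b[t - 1 := d], b ! (t - 1), T, t + 1))
    \<or> (a = I \<and> t \<le> M \<and> b ! (t - 1) > d \<and> s' = (b, d, T, t + 1))
    \<or> (a = N_eq \<and> t \<le> M \<and> b ! (t - 1) = d \<and> s' = (b, d, T, t + 1))
    \<or> (a = N_less \<and> t \<le> M \<and> b ! (t - 1) < d \<and> s' = (b, d, T, t + 1))
    \<or> (a = d_minus \<and> t = M + 1 \<and> T < int M \<and> s' = (b, d - 1, T + 1, 1))
    \<or> (a = b_plus \<and> t = M + 1 \<and> T = int M \<and> s' = (map (\<lambda>x. x + 1) b, d, 0, 1))))"

fun is_path :: "nat \<Rightarrow> bdm_state \<Rightarrow> (action \<times> bdm_state) list \<Rightarrow> bool" where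
  "is_path M s [] = True"
| "is_path M s ((a, s') # p) = (step M s a s' \<and> is_path M s' p)"

definition act_prob :: "nat \<Rightarrow> action \<Rightarrow> real" where
  "act_prob q a = (case a of D \<Rightarrow> (real q - 1) / real q | I \<Rightarrow> 1 / real q | _ \<Rightarrow> 1)"

definition P :: "nat \<Rightarrow> nat \<Rightarrow> bdm_state \<Rightarrow> bdm_state \<Rightarrow> real" where
  "P M q s s' = (\<Sum>a \<in> {a. step M s a s'}. act_prob q a)"

definition irreducible_BDM :: "nat \<Rightarrow> nat \<Rightarrow> bool" where
  "irreducible_BDM M q = (\<forall>s s'. in_S M s \<and> in_S M s' \<longrightarrow>
      (s, s') \<in> {(x, y). in_S M x \<and> P M q x y > 0}\<^sup>*)"

end

theory Submission
  imports Defs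
begin

(* Without the action I at most one transition leaves a state of S, and without N_< at most
   one transition enters it.  So the paths in (ii) are the orbits of the deterministic map
   forward up to their first visit of s0, the paths in (i) are the reversed orbits of the map
   backward, and it remains to show that both orbits reach s0.

   A swap leaves the potential d^2 + (sum of the b_m^2) + M - T unchanged.  After a full forward
   sweep d is the maximum of b_1, ..., b_M, d, hence d >= 0, and the next step (d_- or b_+)
   lowers the potential by exactly 2d.  After a full backward sweep d is the minimum, hence
   d <= 0, and the next step changes the potential by 2d, resp. 2d + 2 <= 0 if T > 0.  Refining
   the potential lexicographically by T and the position t in the sweep, both maps decrease
   strictly, forward everywhere off s0 and backward everywhere off (0,...,0,0;0,1); from that
   state backward reaches s0 after M(M+1) + 1 explicit steps.  Irreducibility follows by
   concatenating a path of (ii) with one of (i). *)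

lemma sum_list_list_update:
  fixes xs :: "'a::ab_group_add list"
  shows "k < length xs \<Longrightarrow> sum_list (xs[k := x]) = sum_list xs + x - xs ! k"
  by (induction xs arbitrary: k) (auto split: nat.split)

lemma sum_list_nonpos_eq_0_iff:
  fixes xs :: "'a::ordered_comm_monoid_add list"
  shows "(\<And>x. x \<in> set xs \<Longrightarrow> x \<le> 0) \<Longrightarrow> sum_list xs = 0 \<longleftrightarrow> (\<forall>x\<in>set xs. x = 0)"
  by (induction xs) (simp_all add: add_nonpos_eq_0_iff sum_list_nonpos)

lemma sum_list_le_if_all_le:
  fixes xs :: "'a::{ordered_comm_monoid_add, semiring_1} list"
  shows "\<forall>x\<in>set xs. x \<le> c \<Longrightarrow> sum_list xs \<le> of_nat (length xs) * c"
  using sum_list_mono[of xs "\<lambda>x. x" "\<lambda>_. c"] by (simp add: sum_list_triv)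

lemma sum_list_ge_if_all_ge:
  fixes xs :: "'a::{ordered_comm_monoid_add, semiring_1} list"
  shows "\<forall>x\<in>set xs. c \<le> x \<Longrightarrow> of_nat (length xs) * c \<le> sum_list xs"
  using sum_list_mono[of xs "\<lambda>_. c" "\<lambda>x. x"] by (simp add: sum_list_triv)

lemma sum_list_power2_add_const:
  fixes c :: "'a::comm_ring_1"
  shows "(\<Sum>x\<leftarrow>xs. (x + c)\<^sup>2) = (\<Sum>x\<leftarrow>xs. x\<^sup>2) + 2 * c * sum_list xs + of_nat (length xs) * c\<^sup>2"
  by (induction xs) (simp_all add: algebra_simps power2_eq_square)

lemma sum_list_power2_diff_const:
  fixes c :: "'a::comm_ring_1"
  shows "(\<Sum>x\<leftarrow>xs. (x - c)\<^sup>2) = (\<Sum>x\<leftarrow>xs. x\<^sup>2) - 2 * c * sum_list xs + of_nat (length xs) * c\<^sup>2"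
  by (induction xs) (simp_all add: algebra_simps power2_eq_square)

lemma funpow_reaches_if_wf_decreasing:
  assumes "wf R"
    and "\<And>x. Inv x \<Longrightarrow> \<not> Target x \<Longrightarrow> Inv (f x) \<and> (f x, x) \<in> R"
    and "Inv x"
  shows "\<exists>n. Target ((f ^^ n) x)"
  using assms(3)
proof (induction x rule: wf_induct_rule[OF assms(1)])
  case (1 x)
  show ?case
  proof (cases "Target x")
    case True
    then show ?thesis by (metis funpow_0)
  next
    case False
    with 1 assms(2) obtain n where "Target ((f ^^ n) (f x))" by blast
    then have "Target ((f ^^ Suc n) x)" by (simp add: funpow_Suc_right del: funpow.simps)
    then show ?thesis ..
  qed
qed

fun forward :: "nat \<Rightarrow> bdm_state \<Rightarrow> bdm_state" where
  "forward M (b, d, T, t) =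
     (if t \<le> M then
        if d < b ! (t - 1) then (b[t - 1 := d], b ! (t - 1), T, t + 1) else (b, d, T, t + 1)
      else if T < int M then (b, d - 1, T + 1, 1)
      else (map (\<lambda>x. x + 1) b, d, 0, 1))"

fun forward_action :: "nat \<Rightarrow> bdm_state \<Rightarrow> action" where
  "forward_action M (b, d, T, t) =
     (if t \<le> M then
        if d < b ! (t - 1) then D else if b ! (t - 1) = d then N_eq else N_less
      else if T < int M then d_minus else b_plus)"

fun backward :: "nat \<Rightarrow> bdm_state \<Rightarrow> bdm_state" where
  "backward M (b, d, T, t) =
     (if 2 \<le> t then
        if b ! (t - 2) < d then (b[t - 2 := d], b ! (t - 2), T, t - 1) else (b, d, T, t - 1)
      else if 1 \<le> T then (b, d + 1, T - 1, M + 1)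
      else (map (\<lambda>x. x - 1) b, d, int M, M + 1))"

fun backward_action :: "nat \<Rightarrow> bdm_state \<Rightarrow> action" where
  "backward_action M (b, d, T, t) =
     (if 2 \<le> t then
        if b ! (t - 2) < d then D else if d < b ! (t - 2) then I else N_eq
      else if 1 \<le> T then d_minus else b_plus)"

lemma step_without_I_iff:
  "in_S M s \<Longrightarrow> step M s a s' \<and> a \<noteq> I \<longleftrightarrow> a = forward_action M s \<and> s' = forward M s"
  by (cases s) (auto simp: step_def in_S_def)

lemma backward_step:
  "in_S M s' \<Longrightarrow> step M (backward M s') (backward_action M s') s' \<and> backward_action M s' \<noteq> N_less"
  by (cases s') (auto simp: step_def in_S_def sum_list_list_update sum_list_subtractf sum_list_triv
      comp_def numeral_2_eq_2 nth_list_update)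

lemma step_without_N_less_iff:
  assumes "in_S M s'"
  shows "step M s a s' \<and> a \<noteq> N_less \<longleftrightarrow> s = backward M s' \<and> a = backward_action M s'"
proof -
  have "s = backward M s' \<and> a = backward_action M s'" if "step M s a s'" "a \<noteq> N_less"
    using that assms by (cases s) (auto simp: step_def in_S_def nth_list_update comp_def)
  then show ?thesis using backward_step[OF assms] by auto
qed

lemma in_S_forward: "in_S M s \<Longrightarrow> in_S M (forward M s)"
  by (cases s) (auto simp: in_S_def sum_list_list_update sum_list_addf sum_list_triv)

lemma in_S_backward: "in_S M s \<Longrightarrow> in_S M (backward M s)"
  using backward_step unfolding step_def by blast

fun potential :: "nat \<Rightarrow> bdm_state \<Rightarrow> int" where
  "potential M (b, d, T, t) = d\<^sup>2 + (\<Sum>x\<leftarrow>b. x\<^sup>2) + int M - T"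

lemma potential_nonneg:
  assumes "in_S M s"
  shows "0 \<le> potential M s"
proof -
  obtain b d T t where s: "s = (b, d, T, t)" by (cases s)
  have "0 \<le> (\<Sum>x\<leftarrow>b. x\<^sup>2)" by (rule sum_list_nonneg) auto
  moreover have "T \<le> int M" using assms by (simp add: s in_S_def)
  ultimately show ?thesis unfolding s potential.simps using zero_le_power2[of d] by linarith
qed

lemma potential_forward:
  assumes "in_S M (b, d, T, t)"
  shows "potential M (forward M (b, d, T, t)) =
           (if t \<le> M then potential M (b, d, T, t) else potential M (b, d, T, t) - 2 * d)"
  using assms
  by (auto simp: in_S_def map_update sum_list_list_update comp_def sum_list_power2_add_const
      power2_diff algebra_simps)

lemma potential_backward:
  assumes "in_S M (b, d, T, t)"
  shows "potential M (backward M (b, d, T, t)) =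
           (if 2 \<le> t then potential M (b, d, T, t)
            else if T = 0 then potential M (b, d, T, t) + 2 * d
            else potential M (b, d, T, t) + 2 * d + 2)"
  using assms
  by (auto simp: in_S_def map_update sum_list_list_update comp_def sum_list_power2_diff_const
      power2_sum algebra_simps)

definition zero_state :: "nat \<Rightarrow> nat \<Rightarrow> bdm_state" where
  "zero_state M t = (replicate M 0, 0, 0, t)"

lemma s0_eq_zero_state: "s0 M = zero_state M (M + 1)"
  by (simp add: s0_def zero_state_def)

lemma max_d_nonneg:
  assumes "in_S M (b, d, T, t)" and "\<forall>x\<in>set b. x \<le> d"
  shows "0 \<le> d"
proof (rule ccontr)
  assume "\<not> 0 \<le> d"
  then have "(1 + int M) * d \<le> (1 + int M) * -1" by (intro mult_left_mono) auto
  moreover have "sum_list b \<le> int M * d" using sum_list_le_if_all_le[OF assms(2)] assms(1)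
    by (simp add: in_S_def)
  ultimately show False using assms(1) by (simp add: in_S_def algebra_simps)
qed

lemma max_d_zero_imp_zero_state:
  assumes "in_S M (b, 0, 0, t)" and "\<forall>x\<in>set b. x \<le> 0"
  shows "(b, 0, 0, t) = zero_state M t"
  using assms sum_list_nonpos_eq_0_iff[of b] replicate_length_same[of b 0]
  by (auto simp: in_S_def zero_state_def)

lemma min_d_nonpos:
  assumes "in_S M (b, d, T, t)" and "\<forall>x\<in>set b. d \<le> x"
  shows "d \<le> 0" and "T \<noteq> 0 \<Longrightarrow> d < 0"
proof -
  have "int M * d \<le> sum_list b" using sum_list_ge_if_all_ge[OF assms(2)] assms(1)
    by (simp add: in_S_def)
  then have "(1 + int M) * d + T \<le> 0" using assms(1) by (simp add: in_S_def algebra_simps)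
  moreover have "0 \<le> T" using assms(1) by (simp add: in_S_def)
  ultimately show "d \<le> 0" and "T \<noteq> 0 \<Longrightarrow> d < 0"
    using zero_less_mult_iff[of "1 + int M" d] zero_le_mult_iff[of "1 + int M" d] by linarith+
qed

lemma min_d_zero_imp_zero_state:
  assumes "in_S M (b, 0, 0, t)" and "\<forall>x\<in>set b. 0 \<le> x"
  shows "(b, 0, 0, t) = zero_state M t"
  using assms sum_list_nonneg_eq_0_iff[of b] replicate_length_same[of b 0]
  by (auto simp: in_S_def zero_state_def)

lemma potential_forward_sweep_end:
  assumes "in_S M (b, d, T, M + 1)" and "\<forall>x\<in>set b. x \<le> d" and "(b, d, T, M + 1) \<noteq> s0 M"
  shows "potential M (forward M (b, d, T, M + 1)) \<le> potential M (b, d, T, M + 1)"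
    and "T = 0 \<Longrightarrow> potential M (forward M (b, d, T, M + 1)) < potential M (b, d, T, M + 1)"
proof -
  have "0 \<le> d" using max_d_nonneg assms(1,2) .
  moreover have "T = 0 \<Longrightarrow> d \<noteq> 0"
    using max_d_zero_imp_zero_state assms by (auto simp: s0_eq_zero_state)
  ultimately show "potential M (forward M (b, d, T, M + 1)) \<le> potential M (b, d, T, M + 1)"
    and "T = 0 \<Longrightarrow> potential M (forward M (b, d, T, M + 1)) < potential M (b, d, T, M + 1)"
    using potential_forward[OF assms(1)] by simp_all
qed

lemma potential_backward_sweep_end:
  assumes "in_S M (b, d, T, 1)" and "\<forall>x\<in>set b. d \<le> x" and "(b, d, T, 1) \<noteq> zero_state M 1"
  shows "potential M (backward M (b, d, T, 1)) \<le> potential M (b, d, T, 1)"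
    and "T = 0 \<Longrightarrow> potential M (backward M (b, d, T, 1)) < potential M (b, d, T, 1)"
proof -
  note min_d_nonpos[OF assms(1,2)]
  moreover have "T = 0 \<Longrightarrow> d \<noteq> 0"
    using min_d_zero_imp_zero_state assms by auto
  ultimately show "potential M (backward M (b, d, T, 1)) \<le> potential M (b, d, T, 1)"
    and "T = 0 \<Longrightarrow> potential M (backward M (b, d, T, 1)) < potential M (b, d, T, 1)"
    using potential_backward[OF assms(1)] by auto
qed

fun prefix_le_d :: "bdm_state \<Rightarrow> bool" where
  "prefix_le_d (b, d, T, t) \<longleftrightarrow> (\<forall>i. i + 1 < t \<longrightarrow> b ! i \<le> d)"

lemma prefix_le_d_forward:
  assumes "in_S M (b, d, T, t)" and "t \<le> M" and "prefix_le_d (b, d, T, t)"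
  shows "prefix_le_d (forward M (b, d, T, t))"
  using assms by (auto simp: in_S_def nth_list_update less_Suc_eq)

(* Decreases along the order 1, 2, ..., M, 0 in which forward runs through the values of T. *)
definition sweep_rank :: "nat \<Rightarrow> int \<Rightarrow> nat" where
  "sweep_rank M T = (if T = 0 then 0 else M + 1 - nat T)"

definition forward_order :: "nat \<Rightarrow> (bdm_state \<times> bdm_state) set" where
  "forward_order M = measures
     [\<lambda>s. of_bool (\<not> prefix_le_d s), \<lambda>s. nat (potential M s),
      \<lambda>(b, d, T, t). sweep_rank M T, \<lambda>(b, d, T, t). M + 1 - t]"

lemma forward_decreases:
  assumes "in_S M s" and "s \<noteq> s0 M"
  shows "(forward M s, s) \<in> forward_order M"
proof -
  obtain b d T t where s: "s = (b, d, T, t)" by (cases s)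
  have S: "length b = M" "1 \<le> t" "t \<le> M + 1" "0 \<le> T" "T \<le> int M"
    using assms(1) by (auto simp: s in_S_def)
  have potential: "0 \<le> potential M (forward M s)"
    using potential_nonneg in_S_forward assms(1) by blast
  consider (sweep) "t \<le> M" | (unsorted) "t = M + 1" "\<not> prefix_le_d s"
    | (sorted) "t = M + 1" "prefix_le_d s"
    using S by linarith
  then show ?thesis
  proof cases
    case sweep
    then show ?thesis
      using prefix_le_d_forward[of M b d T t] potential_forward[of M b d T t] assms(1)
      by (auto simp: s forward_order_def)
  next
    case unsorted
    then show ?thesis by (simp add: s forward_order_def)
  next
    case sorted
    then have "\<forall>x\<in>set b. x \<le> d" using S by (auto simp: s in_set_conv_nth)
    note pot = potential_forward_sweep_end[of M b d T, OF _ this]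
    show ?thesis
    proof (cases "T = 0")
      case True
      then have "nat (potential M (forward M s)) < nat (potential M s)"
        using pot potential assms sorted by (simp add: s nat_less_eq_zless)
      then show ?thesis using sorted by (simp add: s forward_order_def)
    next
      case False
      then have "nat (potential M (forward M s)) \<le> nat (potential M s)"
        using pot assms sorted by (simp add: s)
      moreover have "T < int M \<Longrightarrow> sweep_rank M (T + 1) < sweep_rank M T"
        and "sweep_rank M 0 < sweep_rank M T"
        using False S by (auto simp: sweep_rank_def nat_add_distrib)
      ultimately show ?thesis
        unfolding forward_order_def using sorted
        by (intro measures_lesseq[OF _ measures_lesseq[OF _ measures_less]])
          (simp_all add: s del: potential.simps)
    qed
  qed
qed

lemma forward_reaches_s0:
  assumes "in_S M s"
  shows "\<exists>n. (forward M ^^ n) s = s0 M"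
  by (rule funpow_reaches_if_wf_decreasing[where R = "forward_order M" and Inv = "in_S M"])
    (use assms in_S_forward forward_decreases in \<open>auto simp: forward_order_def\<close>)

fun suffix_ge_d :: "bdm_state \<Rightarrow> bool" where
  "suffix_ge_d (b, d, T, t) \<longleftrightarrow> (\<forall>i. t - 1 \<le> i \<longrightarrow> i < length b \<longrightarrow> d \<le> b ! i)"

lemma suffix_ge_d_backward:
  assumes "2 \<le> t" and "suffix_ge_d (b, d, T, t)"
  shows "suffix_ge_d (backward M (b, d, T, t))"
proof -
  have ge: "d \<le> b ! i" if "t - 2 < i" "i < length b" for i
    using assms that by auto
  show ?thesis
  proof (cases "b ! (t - 2) < d")
    case True
    have "b ! (t - 2) \<le> b[t - 2 := d] ! i" if "t - 2 \<le> i" "i < length b" for i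
      using ge[of i] that True by (cases "i = t - 2") auto
    then show ?thesis using assms(1) True by simp
  next
    case False
    have "d \<le> b ! i" if "t - 2 \<le> i" "i < length b" for i
      using ge[of i] that False by (cases "i = t - 2") auto
    then show ?thesis using assms(1) False by simp
  qed
qed

definition backward_order :: "nat \<Rightarrow> (bdm_state \<times> bdm_state) set" where
  "backward_order M = measures
     [\<lambda>s. of_bool (\<not> suffix_ge_d s), \<lambda>s. nat (potential M s),
      \<lambda>(b, d, T, t). nat T, \<lambda>(b, d, T, t). t]"

lemma backward_decreases:
  assumes "in_S M s" and "s \<noteq> zero_state M 1"
  shows "(backward M s, s) \<in> backward_order M"
proof -
  obtain b d T t where s: "s = (b, d, T, t)" by (cases s)
  have S: "length b = M" "1 \<le> t" "t \<le> M + 1" "0 \<le> T"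
    using assms(1) by (auto simp: s in_S_def)
  have potential: "0 \<le> potential M (backward M s)"
    using potential_nonneg in_S_backward assms(1) by blast
  consider (sweep) "2 \<le> t" | (unsorted) "t = 1" "\<not> suffix_ge_d s"
    | (sorted) "t = 1" "suffix_ge_d s"
    using S by linarith
  then show ?thesis
  proof cases
    case sweep
    then have "potential M (backward M s) = potential M s"
      using potential_backward[of M b d T t] assms(1) by (simp add: s)
    moreover have "suffix_ge_d s \<Longrightarrow> suffix_ge_d (backward M s)"
      using suffix_ge_d_backward[of t b d T M] sweep by (simp add: s)
    ultimately show ?thesis
      using sweep by (cases "suffix_ge_d s") (simp_all add: s backward_order_def)
  next
    case unsorted
    then show ?thesis using S by (simp add: s backward_order_def)
  next
    case sorted
    then have "\<forall>x\<in>set b. d \<le> x" by (auto simp: s in_set_conv_nth)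
    note pot = potential_backward_sweep_end[of M b d T, OF _ this]
    show ?thesis
    proof (cases "T = 0")
      case True
      then have "nat (potential M (backward M s)) < nat (potential M s)"
        using pot potential assms sorted by (simp add: s nat_less_eq_zless)
      then show ?thesis using sorted S by (simp add: s backward_order_def)
    next
      case False
      then have "nat (potential M (backward M s)) \<le> nat (potential M s)"
        using pot assms sorted by (simp add: s)
      moreover have "nat (T - 1) < nat T" using False S by simp
      ultimately show ?thesis
        unfolding backward_order_def using sorted S
        by (intro measures_lesseq[OF _ measures_lesseq[OF _ measures_less]])
          (simp_all add: s del: potential.simps)
    qed
  qed
qed

lemma backward_reaches_zero_state:
  assumes "in_S M s"
  shows "\<exists>n. (backward M ^^ n) s = zero_state M 1"
  by (rule funpow_reaches_if_wf_decreasing[where R = "backward_order M" and Inv = "in_S M"])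
    (use assms in_S_backward backward_decreases in \<open>auto simp: backward_order_def\<close>)

lemma backward_funpow_without_swap:
  assumes "j < t" and "\<forall>i. t - 1 - j \<le> i \<longrightarrow> i < t - 1 \<longrightarrow> d \<le> b ! i"
  shows "(backward M ^^ j) (b, d, T, t) = (b, d, T, t - j)"
  using assms
proof (induction j)
  case (Suc j)
  then have "(backward M ^^ j) (b, d, T, t) = (b, d, T, t - j)" by simp
  moreover have "\<not> b ! (t - j - 2) < d" using Suc.prems(2)[rule_format, of "t - j - 2"] Suc.prems(1)
    by linarith
  ultimately show ?case using Suc.prems(1) by simp
qed simp

(* The states at the ends of the sweeps of the backward orbit of zero_state M 1. *)
definition neg_prefix_state :: "nat \<Rightarrow> nat \<Rightarrow> bdm_state" where
  "neg_prefix_state M k = (replicate k (-1) @ replicate (M - k) 0, 0, int k, M + 1)"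

lemma backward_sweep_neg_prefix_state:
  assumes "1 \<le> k" and "k \<le> M"
  shows "(backward M ^^ (M + 1)) (neg_prefix_state M k) = neg_prefix_state M (k - 1)"
proof -
  define b :: "int list" where "b = replicate k (-1) @ replicate (M - k) 0"
  define b' :: "int list" where "b' = replicate (k - 1) (-1) @ replicate (M - k + 1) 0"
  have zeros: "(backward M ^^ (M - k)) (b, 0, int k, M + 1) = (b, 0, int k, k + 1)"
    using backward_funpow_without_swap[of "M - k" "M + 1" 0 b M "int k"] assms
    by (simp add: b_def nth_append)
  have "b[k - 1 := 0] = b'"
    by (rule nth_equalityI) (use assms in \<open>auto simp: b_def b'_def nth_append nth_list_update\<close>)
  moreover have "b ! (k - 1) = -1" using assms by (simp add: b_def nth_append)
  ultimately have swap: "backward M (b, 0, int k, k + 1) = (b', -1, int k, k)"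
    using assms(1) by simp
  have minus_ones: "(backward M ^^ (k - 1)) (b', -1, int k, k) = (b', -1, int k, 1)"
    using backward_funpow_without_swap[of "k - 1" k "-1" b' M "int k"] assms
    by (simp add: b'_def nth_append)
  have restart: "backward M (b', -1, int k, 1) = neg_prefix_state M (k - 1)"
    using assms by (simp add: b'_def neg_prefix_state_def of_nat_diff Suc_diff_le)
  have "M + 1 = 1 + ((k - 1) + (1 + (M - k)))" using assms by simp
  then have "backward M ^^ (M + 1) =
      backward M ^^ 1 \<circ> (backward M ^^ (k - 1) \<circ> (backward M ^^ 1 \<circ> backward M ^^ (M - k)))"
    by (metis funpow_add)
  then show ?thesis using zeros swap minus_ones restart by (simp add: neg_prefix_state_def b_def)
qed

lemma backward_funpow_neg_prefix_state:
  "k \<le> M \<Longrightarrow> (backward M ^^ ((M + 1) * k)) (neg_prefix_state M k) = s0 M"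
proof (induction k)
  case 0
  then show ?case by (simp add: neg_prefix_state_def s0_def)
next
  case (Suc k)
  have "(M + 1) * Suc k = (M + 1) * k + (M + 1)" by simp
  then show ?case
    using Suc backward_sweep_neg_prefix_state[of "Suc k" M] by (simp only: funpow_add) simp
qed

lemma backward_reaches_s0:
  assumes "in_S M s"
  shows "\<exists>n. (backward M ^^ n) s = s0 M"
proof -
  obtain n where "(backward M ^^ n) s = zero_state M 1"
    using backward_reaches_zero_state[OF assms] by blast
  moreover have "backward M (zero_state M 1) = neg_prefix_state M M"
    by (simp add: zero_state_def neg_prefix_state_def map_replicate_const)
  ultimately have "(backward M ^^ ((M + 1) * M + Suc n)) s = s0 M"
    using backward_funpow_neg_prefix_state[of M M] by (simp only: funpow_add funpow.simps(2) o_apply)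
  then show ?thesis ..
qed

lemma is_path_append:
  "is_path M s (p @ p') \<longleftrightarrow> is_path M s p \<and> is_path M (last (s # map snd p)) p'"
  by (induction p arbitrary: s) auto

definition initial_path :: "nat \<Rightarrow> bdm_state \<Rightarrow> (action \<times> bdm_state) list \<Rightarrow> bool" where
  "initial_path M s p \<longleftrightarrow> is_path M (s0 M) p \<and> (\<forall>x \<in> set p. fst x \<noteq> N_less)
     \<and> s0 M \<notin> snd ` set p \<and> last (s0 M # map snd p) = s"

definition return_path :: "nat \<Rightarrow> bdm_state \<Rightarrow> (action \<times> bdm_state) list \<Rightarrow> bool" where
  "return_path M s p \<longleftrightarrow> is_path M s p \<and> (\<forall>x \<in> set p. fst x \<noteq> I)
     \<and> s0 M \<notin> set (butlast (s # map snd p)) \<and> last (s # map snd p) = s0 M"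

lemma return_path_iff:
  assumes "in_S M s"
  shows "return_path M s p \<longleftrightarrow>
    (if s = s0 M then p = []
     else \<exists>p'. p = (forward_action M s, forward M s) # p' \<and> return_path M (forward M s) p')"
proof (cases p)
  case Nil
  then show ?thesis by (simp add: return_path_def)
next
  case (Cons x p')
  obtain a s' where "x = (a, s')" by (cases x)
  then show ?thesis
    using Cons step_without_I_iff[OF assms, of a s'] by (auto simp: return_path_def)
qed

lemma return_path_unique:
  "in_S M s \<Longrightarrow> return_path M s p \<Longrightarrow> return_path M s p' \<Longrightarrow> p = p'"
proof (induction p arbitrary: s p')
  case Nil
  then show ?case by (auto simp: return_path_iff split: if_splits)
next
  case (Cons x p)
  note iff = return_path_iff[OF Cons.prems(1)]
  have "s \<noteq> s0 M" and "x = (forward_action M s, forward M s)"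
    and "return_path M (forward M s) p"
    using Cons.prems(2) by (simp_all add: iff split: if_splits)
  moreover obtain p'' where "p' = (forward_action M s, forward M s) # p''"
    and "return_path M (forward M s) p''"
    using Cons.prems(3) \<open>s \<noteq> s0 M\<close> by (auto simp: iff)
  ultimately show ?case using Cons.IH[OF in_S_forward[OF Cons.prems(1)]] by simp
qed

lemma return_path_exists:
  assumes "in_S M s"
  shows "\<exists>p. return_path M s p"
proof -
  obtain n where "(forward M ^^ n) s = s0 M" using forward_reaches_s0[OF assms] by blast
  with assms show ?thesis
  proof (induction n arbitrary: s)
    case 0
    then show ?case using return_path_iff by auto
  next
    case (Suc n)
    then have "(forward M ^^ n) (forward M s) = s0 M"
      by (simp add: funpow_Suc_right del: funpow.simps)
    then obtain p where "return_path M (forward M s) p"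
      using Suc.IH in_S_forward[OF Suc.prems(1)] by blast
    then show ?case using return_path_iff[OF Suc.prems(1)] by (cases "s = s0 M") auto
  qed
qed

lemma initial_path_iff:
  assumes "in_S M s"
  shows "initial_path M s p \<longleftrightarrow>
    (if s = s0 M then p = []
     else \<exists>p'. p = p' @ [(backward_action M s, s)] \<and> initial_path M (backward M s) p')"
proof (cases p rule: rev_exhaust)
  case Nil
  then show ?thesis by (auto simp: initial_path_def)
next
  case (snoc p' x)
  obtain a s' where "x = (a, s')" by (cases x)
  then show ?thesis
    using snoc step_without_N_less_iff[OF assms, of "last (s0 M # map snd p')" a]
    by (auto simp: initial_path_def is_path_append)
qed

lemma initial_path_unique:
  "in_S M s \<Longrightarrow> initial_path M s p \<Longrightarrow> initial_path M s p' \<Longrightarrow> p = p'"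
proof (induction p arbitrary: s p' rule: rev_induct)
  case Nil
  then show ?case by (auto simp: initial_path_iff split: if_splits)
next
  case (snoc x p)
  note iff = initial_path_iff[OF snoc.prems(1)]
  have "s \<noteq> s0 M" and "x = (backward_action M s, s)"
    and "initial_path M (backward M s) p"
    using snoc.prems(2) by (simp_all add: iff split: if_splits)
  moreover obtain p'' where "p' = p'' @ [(backward_action M s, s)]"
    and "initial_path M (backward M s) p''"
    using snoc.prems(3) \<open>s \<noteq> s0 M\<close> by (auto simp: iff)
  ultimately show ?case using snoc.IH[OF in_S_backward[OF snoc.prems(1)]] by simp
qed

lemma initial_path_exists:
  assumes "in_S M s"
  shows "\<exists>p. initial_path M s p"
proof -
  obtain n where "(backward M ^^ n) s = s0 M" using backward_reaches_s0[OF assms] by blast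
  with assms show ?thesis
  proof (induction n arbitrary: s)
    case 0
    then show ?case using initial_path_iff by auto
  next
    case (Suc n)
    then have "(backward M ^^ n) (backward M s) = s0 M"
      by (simp add: funpow_Suc_right del: funpow.simps)
    then obtain p where "initial_path M (backward M s) p"
      using Suc.IH in_S_backward[OF Suc.prems(1)] by blast
    then show ?case using initial_path_iff[OF Suc.prems(1)] by (cases "s = s0 M") auto
  qed
qed

lemma UNIV_action: "(UNIV :: action set) = {D, I, N_eq, N_less, d_minus, b_plus}"
  using action.exhaust by auto

lemma P_pos_if_step:
  assumes "q \<ge> 2" and "step M s a s'"
  shows "0 < P M q s s'"
  unfolding P_def
proof (rule sum_pos)
  show "finite {a. step M s a s'}" by (simp add: UNIV_action finite_subset[OF subset_UNIV])
  show "{a. step M s a s'} \<noteq> {}" using assms(2) by blast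
  show "0 < act_prob q a'" for a' using assms(1) by (cases a') (auto simp: act_prob_def)
qed

lemma is_path_rtrancl:
  assumes "q \<ge> 2"
  shows "is_path M s p \<Longrightarrow> (s, last (s # map snd p)) \<in> {(x, y). in_S M x \<and> P M q x y > 0}\<^sup>*"
proof (induction p arbitrary: s)
  case (Cons x p)
  obtain a s' where x: "x = (a, s')" by (cases x)
  with Cons.prems have "step M s a s'" and "is_path M s' p" by auto
  moreover have "in_S M s" using \<open>step M s a s'\<close> unfolding step_def by (rule conjunct1)
  ultimately have "(s, s') \<in> {(x, y). in_S M x \<and> P M q x y > 0}"
    using P_pos_if_step[OF assms] by blast
  then show ?case
    using converse_rtrancl_into_rtrancl[OF _ Cons.IH[OF \<open>is_path M s' p\<close>]] x by simp
qed simp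

lemma irreducible_BDM:
  assumes "q \<ge> 2"
  shows "irreducible_BDM M q"
  unfolding irreducible_BDM_def
proof (intro allI impI)
  fix s s' assume "in_S M s \<and> in_S M s'"
  then obtain p p' where "return_path M s p" and "initial_path M s' p'"
    using return_path_exists initial_path_exists by blast
  then have "(s, s0 M) \<in> {(x, y). in_S M x \<and> P M q x y > 0}\<^sup>*"
    and "(s0 M, s') \<in> {(x, y). in_S M x \<and> P M q x y > 0}\<^sup>*"
    using is_path_rtrancl[OF assms, of M s p] is_path_rtrancl[OF assms, of M "s0 M" p']
    unfolding return_path_def initial_path_def by simp_all
  then show "(s, s') \<in> {(x, y). in_S M x \<and> P M q x y > 0}\<^sup>*"
    by (rule rtrancl_trans)
qed

theorem theorem10:
  fixes M q :: nat
  assumes "M \<ge> 1" and "q \<ge> 2"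
  shows "(\<forall>s. in_S M s \<longrightarrow>
           (\<exists>!p. is_path M (s0 M) p \<and> (\<forall>x \<in> set p. fst x \<noteq> N_less)
                 \<and> s0 M \<notin> snd ` set p \<and> last (s0 M # map snd p) = s))
       \<and> (\<forall>s. in_S M s \<longrightarrow>
           (\<exists>!p. is_path M s p \<and> (\<forall>x \<in> set p. fst x \<noteq> I)
                 \<and> s0 M \<notin> set (butlast (s # map snd p)) \<and> last (s # map snd p) = s0 M))
       \<and> irreducible_BDM M q"
  unfolding initial_path_def[symmetric] return_path_def[symmetric]
proof (intro conjI allI impI)
  fix s assume "in_S M s"
  show "\<exists>!p. initial_path M s p"
    using initial_path_exists[OF \<open>in_S M s\<close>] initial_path_unique[OF \<open>in_S M s\<close>] by blast
  show "\<exists>!p. return_path M s p"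
    using return_path_exists[OF \<open>in_S M s\<close>] return_path_unique[OF \<open>in_S M s\<close>] by blast
next
  show "irreducible_BDM M q" using irreducible_BDM[OF assms(2)] .
qed

end
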